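(* Let $k\ge 1$ and let $G$ be a graph obtained as a $k$-clique-sum of graphs $G_1$ and $G_2$, with common clique $K=\{v_1,\dots,v_k\}$. For $i=1,2$ let $G_i'=G_i\cap G$ (the subgraph of $G$ with vertex set $V(G_i)$ and edge set $E(G_i)\cap E(G)$). Let $\ell$ be an integer. Suppose that $G_1'$ has an AT-orientation $D_1'$ with $\Delta^+(D_1')\le \ell$, and that $G_2$ has an AT-orientation $D_2$ with $\Delta^+(D_2)\le\ell$ and $d^+_{D_2}(v_i)=i-1$ for $i=1,\dots,k$. Then $G$ has an AT-orientation $D$ such that $\Delta^+(D)\le\ell$ and $d_D^+(v)=d_{D_1'}^+(v)$ for every $v\in V(G_1)$.
   Context: All graphs are finite, simple and undirected. A clique of a graph is a nonempty vertex subset inducing a complete subgraph. Given vertex-disjoint graphs $G_1,G_2$, cliques $X_i\subset V(G_i)$ with $|X_1|=|X_2|=k$, and a bijection $f:X_1\to X_2$, a $k$-clique-sum of $G_1$ and $G_2$ is any graph obtained from $G_1\cup G_2$ by identifying $x$ with $f(x)$ for every $x\in X_1$ and then possibly deleting some edges of the resulting common clique. For an orientation $D$ of a graph, $d_D^+(v)$ is the out-degree of $v$ and $\Delta^+(D)$ the maximum out-degree. An Eulerian subdigraph of $D$ is a spanning subdigraph $H$ with $d_H^+(v)=d_H^-(v)$ for all vertices $v$ (including the one with no arcs); $EE(D)$ (resp. $OE(D)$) is the set of Eulerian subdigraphs with an even (resp. odd) number of arcs. An orientation $D$ is an AT-orientation if $|EE(D)|\ne|OE(D)|$. *)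

theory Defs
  imports Main
begin

definition simple_graph :: "'a set \<Rightarrow> 'a set set \<Rightarrow> bool" where
  "simple_graph V E \<longleftrightarrow> finite V \<and>
     (\<forall>e\<in>E. \<exists>x y. x \<noteq> y \<and> x \<in> V \<and> y \<in> V \<and> e = {x, y})"

definition is_clique :: "'a set \<Rightarrow> 'a set set \<Rightarrow> 'a set \<Rightarrow> bool" where
  "is_clique V E X \<longleftrightarrow> X \<noteq> {} \<and> X \<subseteq> V \<and>
     (\<forall>x\<in>X. \<forall>y\<in>X. x \<noteq> y \<longrightarrow> {x, y} \<in> E)"

definition is_orientation :: "'a set \<Rightarrow> 'a set set \<Rightarrow> ('a \<times> 'a) set \<Rightarrow> bool" where
  "is_orientation V E D \<longleftrightarrow>
     (\<forall>(x, y)\<in>D. x \<in> V \<and> y \<in> V \<and> {x, y} \<in> E) \<and>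
     (\<forall>x y. {x, y} \<in> E \<longrightarrow> ((x, y) \<in> D \<longleftrightarrow> (y, x) \<notin> D))"

definition outdeg :: "('a \<times> 'a) set \<Rightarrow> 'a \<Rightarrow> nat" where
  "outdeg D v = card {w. (v, w) \<in> D}"

definition indeg :: "('a \<times> 'a) set \<Rightarrow> 'a \<Rightarrow> nat" where
  "indeg D v = card {w. (w, v) \<in> D}"

definition eulerian_sub :: "'a set \<Rightarrow> ('a \<times> 'a) set \<Rightarrow> ('a \<times> 'a) set \<Rightarrow> bool" where
  "eulerian_sub V D H \<longleftrightarrow> H \<subseteq> D \<and> (\<forall>v\<in>V. outdeg H v = indeg H v)"

definition EE :: "'a set \<Rightarrow> ('a \<times> 'a) set \<Rightarrow> ('a \<times> 'a) set set" where
  "EE V D = {H. eulerian_sub V D H \<and> even (card H)}"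

definition OE :: "'a set \<Rightarrow> ('a \<times> 'a) set \<Rightarrow> ('a \<times> 'a) set set" where
  "OE V D = {H. eulerian_sub V D H \<and> odd (card H)}"

definition AT_orientation :: "'a set \<Rightarrow> 'a set set \<Rightarrow> ('a \<times> 'a) set \<Rightarrow> bool" where
  "AT_orientation V E D \<longleftrightarrow> is_orientation V E D \<and> card (EE V D) \<noteq> card (OE V D)"

definition max_outdeg_le :: "'a set \<Rightarrow> ('a \<times> 'a) set \<Rightarrow> int \<Rightarrow> bool" where
  "max_outdeg_le V D l \<longleftrightarrow> (\<forall>v\<in>V. int (outdeg D v) \<le> l)"

text \<open>G = (V1 \<union> V2, E) is a k-clique-sum of (V1,E1) and (V2,E2) along the common clique K
  (the identification is modelled by letting the two vertex sets intersect exactly in K).\<close>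
definition clique_sum :: "nat \<Rightarrow> 'a set \<Rightarrow> 'a set set \<Rightarrow> 'a set \<Rightarrow> 'a set set \<Rightarrow> 'a set \<Rightarrow> 'a set set \<Rightarrow> bool" where
  "clique_sum k V1 E1 V2 E2 K E \<longleftrightarrow>
     simple_graph V1 E1 \<and> simple_graph V2 E2 \<and>
     V1 \<inter> V2 = K \<and> card K = k \<and> is_clique V1 E1 K \<and> is_clique V2 E2 K \<and>
     E \<subseteq> E1 \<union> E2 \<and> (\<forall>e \<in> E1 \<union> E2. \<not> e \<subseteq> K \<longrightarrow> e \<in> E)"

end

theory Submission
  imports Defs
begin

text \<open>
  The out-degrees 0, ..., k - 1 on the clique K force D2 to orient K as a transitive tournament
  in which v i points exactly to the v j with j < i; in particular every arc of D2 starting in K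
  stays in K. Let D consist of D1' and the arcs of D2 not inside K. These arcs of D2 start in
  V2 - V1, so V1 is closed under out-arcs in D, and since in a balanced digraph as many arcs
  enter a vertex set as leave it, no Eulerian subdigraph of D enters V1 from outside either. The
  same argument, applied to an initial segment of the tournament, shows that Eulerian
  subdigraphs of D2 use no arc inside K. Hence the Eulerian subdigraphs of D are exactly the
  disjoint unions of one of D1' and one of D2, so |EE| - |OE| is multiplicative and D is an
  AT-orientation.
\<close>

lemma finite_out_neighbours: "finite H \<Longrightarrow> finite {w. (v, w) \<in> H}"
  by (rule finite_subset[of _ "snd ` H"]) force+

lemma indeg_eq_outdeg_converse: "indeg H v = outdeg (H\<inverse>) v"
  unfolding indeg_def outdeg_def by simp

lemma sum_outdeg_eq_card:
  assumes "finite H" "finite S"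
  shows "(\<Sum>v\<in>S. outdeg H v) = card (H \<inter> S \<times> UNIV)"
proof -
  have "H \<inter> S \<times> UNIV = (SIGMA v:S. {w. (v, w) \<in> H})" by auto
  then show ?thesis using assms by (simp add: outdeg_def finite_out_neighbours)
qed

lemma sum_indeg_eq_card:
  assumes "finite H" "finite S"
  shows "(\<Sum>v\<in>S. indeg H v) = card (H \<inter> UNIV \<times> S)"
proof -
  have "H \<inter> UNIV \<times> S = (H\<inverse> \<inter> S \<times> UNIV)\<inverse>" by auto
  then show ?thesis
    using sum_outdeg_eq_card[of "H\<inverse>" S] assms by (simp add: indeg_eq_outdeg_converse)
qed

text \<open>Summing the balance condition over S, the arcs with tail in S are as many as those with
  head in S.\<close>
lemma balanced_out_closed_imp_in_closed:
  assumes "finite H" "finite S" "\<forall>v\<in>S. outdeg H v = indeg H v"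
    and out_closed: "\<forall>(x, y)\<in>H. x \<in> S \<longrightarrow> y \<in> S"
    and "(x, y) \<in> H" "y \<in> S"
  shows "x \<in> S"
proof -
  have "card (H \<inter> S \<times> UNIV) = card (H \<inter> UNIV \<times> S)"
    using assms(1-3) by (simp flip: sum_outdeg_eq_card sum_indeg_eq_card)
  moreover have "H \<inter> S \<times> UNIV \<subseteq> H \<inter> UNIV \<times> S" using out_closed by auto
  ultimately have "H \<inter> S \<times> UNIV = H \<inter> UNIV \<times> S"
    using assms(1) by (intro card_subset_eq) auto
  then show ?thesis using assms(5,6) by blast
qed

lemma outdeg_Un_disjoint:
  assumes "finite A" "finite B" "A \<inter> B = {}"
  shows "outdeg (A \<union> B) v = outdeg A v + outdeg B v"
proof -
  have "{w. (v, w) \<in> A \<union> B} = {w. (v, w) \<in> A} \<union> {w. (v, w) \<in> B}" by auto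
  moreover have "{w. (v, w) \<in> A} \<inter> {w. (v, w) \<in> B} = {}" using assms(3) by auto
  ultimately show ?thesis
    unfolding outdeg_def using assms(1,2) by (simp add: card_Un_disjoint finite_out_neighbours)
qed

lemma indeg_Un_disjoint:
  assumes "finite A" "finite B" "A \<inter> B = {}"
  shows "indeg (A \<union> B) v = indeg A v + indeg B v"
  using outdeg_Un_disjoint[of "A\<inverse>" "B\<inverse>" v] assms
  by (simp add: indeg_eq_outdeg_converse converse_Un flip: converse_Int)

lemma outdeg_Un_separated_tails:
  assumes "D1 \<subseteq> S \<times> UNIV" "D2 \<subseteq> (- S) \<times> UNIV"
  shows "u \<in> S \<Longrightarrow> outdeg (D1 \<union> D2) u = outdeg D1 u"
    and "u \<notin> S \<Longrightarrow> outdeg (D1 \<union> D2) u = outdeg D2 u"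
proof -
  assume "u \<in> S"
  then have "{w. (u, w) \<in> D1 \<union> D2} = {w. (u, w) \<in> D1}" using assms(2) by blast
  then show "outdeg (D1 \<union> D2) u = outdeg D1 u" unfolding outdeg_def by simp
next
  assume "u \<notin> S"
  then have "{w. (u, w) \<in> D1 \<union> D2} = {w. (u, w) \<in> D2}" using assms(1) by blast
  then show "outdeg (D1 \<union> D2) u = outdeg D2 u" unfolding outdeg_def by simp
qed

lemma degrees_outside_eq_0:
  assumes "H \<subseteq> V \<times> V" "v \<notin> V"
  shows "outdeg H v = 0" "indeg H v = 0"
proof -
  have "{w. (v, w) \<in> H} = {}" "{w. (w, v) \<in> H} = {}" using assms by auto
  then show "outdeg H v = 0" "indeg H v = 0" unfolding outdeg_def indeg_def by simp_all
qed

lemma balanced_outside: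
  assumes "H \<subseteq> V \<times> V" "\<forall>u\<in>V. outdeg H u = indeg H u"
  shows "outdeg H v = indeg H v"
  using assms degrees_outside_eq_0[OF assms(1)] by (cases "v \<in> V") auto

definition eulerian_subs :: "'a set \<Rightarrow> ('a \<times> 'a) set \<Rightarrow> ('a \<times> 'a) set set" where
  "eulerian_subs V D = {H. eulerian_sub V D H}"

definition eulerian_diff :: "'a set \<Rightarrow> ('a \<times> 'a) set \<Rightarrow> int" where
  "eulerian_diff V D = (\<Sum>H\<in>eulerian_subs V D. (-1) ^ card H)"

lemma finite_eulerian_subs: "finite D \<Longrightarrow> finite (eulerian_subs V D)"
  unfolding eulerian_subs_def eulerian_sub_def by (rule finite_subset[of _ "Pow D"]) auto

lemma eulerian_diff_eq_card_EE_OE: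
  assumes "finite D"
  shows "eulerian_diff V D = int (card (EE V D)) - int (card (OE V D))"
proof -
  have split: "eulerian_subs V D = EE V D \<union> OE V D" "EE V D \<inter> OE V D = {}"
    unfolding eulerian_subs_def EE_def OE_def by auto
  then have "finite (EE V D)" "finite (OE V D)"
    using finite_eulerian_subs[OF assms, of V] by auto
  then have "eulerian_diff V D = (\<Sum>H\<in>EE V D. (-1) ^ card H) + (\<Sum>H\<in>OE V D. (-1) ^ card H)"
    unfolding eulerian_diff_def split(1) using split(2) by (rule sum.union_disjoint)
  also have "\<dots> = (\<Sum>H\<in>EE V D. 1) + (\<Sum>H\<in>OE V D. -1)"
    by (intro arg_cong2[where f = "(+)"] sum.cong) (auto simp: EE_def OE_def)
  finally show ?thesis by simp
qed

lemma AT_orientation_iff_eulerian_diff: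
  "finite D \<Longrightarrow> AT_orientation V E D \<longleftrightarrow> is_orientation V E D \<and> eulerian_diff V D \<noteq> 0"
  unfolding AT_orientation_def by (simp add: eulerian_diff_eq_card_EE_OE)

lemma eulerian_subs_Un:
  assumes "finite V1" "finite D1" "finite D2"
    and D1: "D1 \<subseteq> V1 \<times> V1" and D2: "D2 \<subseteq> (V2 - V1) \<times> V2"
  shows "eulerian_subs (V1 \<union> V2) (D1 \<union> D2) =
    (\<lambda>(A, B). A \<union> B) ` (eulerian_subs V1 D1 \<times> eulerian_subs V2 D2)"
proof
  show "(\<lambda>(A, B). A \<union> B) ` (eulerian_subs V1 D1 \<times> eulerian_subs V2 D2)
      \<subseteq> eulerian_subs (V1 \<union> V2) (D1 \<union> D2)"
  proof clarify
    fix A B assume "A \<in> eulerian_subs V1 D1" "B \<in> eulerian_subs V2 D2"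
    then have A: "A \<subseteq> D1" "\<forall>u\<in>V1. outdeg A u = indeg A u"
      and B: "B \<subseteq> D2" "\<forall>u\<in>V2. outdeg B u = indeg B u"
      unfolding eulerian_subs_def eulerian_sub_def by auto
    have "A \<subseteq> V1 \<times> V1" "B \<subseteq> V2 \<times> V2" using A(1) B(1) D1 D2 by auto
    then have "outdeg A u = indeg A u" "outdeg B u = indeg B u" for u
      using A(2) B(2) by (simp_all add: balanced_outside)
    moreover have "finite A" "finite B" "A \<inter> B = {}"
      using A(1) B(1) D1 D2 assms(2,3) finite_subset by auto
    ultimately show "A \<union> B \<in> eulerian_subs (V1 \<union> V2) (D1 \<union> D2)"
      using A(1) B(1)
      by (auto simp: eulerian_subs_def eulerian_sub_def outdeg_Un_disjoint indeg_Un_disjoint)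
  qed
  show "eulerian_subs (V1 \<union> V2) (D1 \<union> D2)
      \<subseteq> (\<lambda>(A, B). A \<union> B) ` (eulerian_subs V1 D1 \<times> eulerian_subs V2 D2)"
  proof
    fix H assume "H \<in> eulerian_subs (V1 \<union> V2) (D1 \<union> D2)"
    then have H: "H \<subseteq> D1 \<union> D2" and bal: "\<forall>u\<in>V1 \<union> V2. outdeg H u = indeg H u"
      unfolding eulerian_subs_def eulerian_sub_def by auto
    have "finite H" using H assms(2,3) finite_subset by auto
    have no_entry: "x \<in> V1" if "(x, y) \<in> H" "y \<in> V1" for x y
    proof (rule balanced_out_closed_imp_in_closed[OF \<open>finite H\<close> assms(1) _ _ that])
      show "\<forall>u\<in>V1. outdeg H u = indeg H u" using bal by simp
      show "\<forall>(a, b)\<in>H. a \<in> V1 \<longrightarrow> b \<in> V1" using H D1 D2 by blast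
    qed
    define A B where "A = H \<inter> D1" and "B = H \<inter> D2"
    have HAB: "H = A \<union> B" using H unfolding A_def B_def by auto
    have A_in: "A \<subseteq> V1 \<times> V1" using D1 unfolding A_def by auto
    have B_off: "B \<subseteq> (V2 - V1) \<times> (V2 - V1)" using D2 no_entry unfolding B_def by auto
    have "finite A" "finite B" "A \<inter> B = {}"
      using \<open>finite H\<close> D1 D2 unfolding A_def B_def by auto
    then have deg_H: "outdeg H u = outdeg A u + outdeg B u"
      "indeg H u = indeg A u + indeg B u" for u
      unfolding HAB by (simp_all add: outdeg_Un_disjoint indeg_Un_disjoint)
    have "outdeg A u = indeg A u" if "u \<in> V1" for u
      using bal deg_H[of u] degrees_outside_eq_0[OF B_off, of u] that by simp
    then have "A \<in> eulerian_subs V1 D1"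
      unfolding eulerian_subs_def eulerian_sub_def A_def by auto
    have "outdeg B u = indeg B u" if "u \<in> V2 - V1" for u
      using bal deg_H[of u] degrees_outside_eq_0[OF A_in, of u] that by simp
    then have "outdeg B u = indeg B u" for u
      using balanced_outside[OF B_off] by blast
    then have "B \<in> eulerian_subs V2 D2"
      unfolding eulerian_subs_def eulerian_sub_def B_def by auto
    with \<open>A \<in> eulerian_subs V1 D1\<close>
    show "H \<in> (\<lambda>(A, B). A \<union> B) ` (eulerian_subs V1 D1 \<times> eulerian_subs V2 D2)"
      unfolding HAB by blast
  qed
qed

lemma eulerian_diff_Un:
  assumes "finite V1" "finite D1" "finite D2" "D1 \<subseteq> V1 \<times> V1" "D2 \<subseteq> (V2 - V1) \<times> V2"
  shows "eulerian_diff (V1 \<union> V2) (D1 \<union> D2) = eulerian_diff V1 D1 * eulerian_diff V2 D2"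
proof -
  let ?P = "eulerian_subs V1 D1 \<times> eulerian_subs V2 D2"
  have sub: "A \<subseteq> D1" "B \<subseteq> D2" if "(A, B) \<in> ?P" for A B
    using that unfolding eulerian_subs_def eulerian_sub_def by auto
  have disj: "D1 \<inter> D2 = {}" using assms(4,5) by auto
  have "inj_on (\<lambda>(A, B). A \<union> B) ?P"
    by (rule inj_on_inverseI[where g = "\<lambda>H. (H \<inter> D1, H \<inter> D2)"]) (use sub disj in fastforce)
  moreover have "card (A \<union> B) = card A + card B" if "(A, B) \<in> ?P" for A B
    using sub[OF that] disj assms(2,3) by (intro card_Un_disjoint) (auto intro: finite_subset)
  ultimately have "eulerian_diff (V1 \<union> V2) (D1 \<union> D2) =
      (\<Sum>(A, B)\<in>?P. (-1) ^ card A * (-1) ^ card B)"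
    unfolding eulerian_diff_def eulerian_subs_Un[OF assms]
    by (auto simp: sum.reindex power_add intro!: sum.cong)
  also have "\<dots> = eulerian_diff V1 D1 * eulerian_diff V2 D2"
    unfolding eulerian_diff_def sum_product sum.cartesian_product ..
  finally show ?thesis .
qed

lemma simple_graph_edgeD:
  assumes "simple_graph V E" "{x, y} \<in> E"
  shows "x \<in> V \<and> y \<in> V \<and> x \<noteq> y"
proof -
  obtain a b where "a \<noteq> b" "a \<in> V" "b \<in> V" "{x, y} = {a, b}"
    using assms unfolding simple_graph_def by blast
  then show ?thesis by (auto simp: doubleton_eq_iff)
qed

lemma orientation_arcD:
  assumes "is_orientation V E D" "(x, y) \<in> D"
  shows "x \<in> V" "y \<in> V" "{x, y} \<in> E"
proof -
  have "\<forall>(x, y)\<in>D. x \<in> V \<and> y \<in> V \<and> {x, y} \<in> E"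
    using assms(1) unfolding is_orientation_def by (rule conjunct1)
  then show "x \<in> V" "y \<in> V" "{x, y} \<in> E" using assms(2) by auto
qed

lemma orientation_edgeD:
  assumes "is_orientation V E D" "{x, y} \<in> E"
  shows "(x, y) \<in> D \<longleftrightarrow> (y, x) \<notin> D"
  using assms unfolding is_orientation_def by blast

lemma orientation_arcs_subset: "is_orientation V E D \<Longrightarrow> D \<subseteq> V \<times> V"
  by (auto dest: orientation_arcD)

lemma finite_orientation:
  assumes "is_orientation V E D" "finite V"
  shows "finite D"
  using finite_subset[OF orientation_arcs_subset[OF assms(1)]] assms(2) by simp

lemma clique_out_neighbours_eq_lower:
  assumes D: "is_orientation V E D" "finite D"
    and K: "is_clique V E (v ` {1..k})" "inj_on v {1..k}"
    and deg: "\<forall>i\<in>{1..k}. outdeg D (v i) = i - 1"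
  shows "i \<in> {1..k} \<Longrightarrow> {w. (v i, w) \<in> D} = v ` {1..<i}"
proof (induction i rule: less_induct)
  case (less i)
  have "(v i, v j) \<in> D" if j: "j \<in> {1..<i}" for j
  proof -
    have j_k: "j \<in> {1..k}" "j < i" using j less.prems by auto
    then have IH: "{w. (v j, w) \<in> D} = v ` {1..<j}" by (rule less.IH[rotated])
    have "{1..<j} \<subseteq> {1..k}" using j_k by auto
    then have "v i \<notin> v ` {1..<j}"
      using inj_on_image_mem_iff[OF K(2) less.prems] j_k by simp
    with IH have not_back: "(v j, v i) \<notin> D" by blast
    have "v j \<noteq> v i" using inj_on_eq_iff[OF K(2) j_k(1) less.prems] j_k(2) by simp
    then have "{v j, v i} \<in> E" using K(1) less.prems j_k unfolding is_clique_def by blast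
    with not_back show ?thesis using orientation_edgeD[OF D(1)] by blast
  qed
  then have lower_out: "v ` {1..<i} \<subseteq> {w. (v i, w) \<in> D}" by blast
  have "{1..<i} \<subseteq> {1..k}" using less.prems by auto
  then have "card (v ` {1..<i}) = card {w. (v i, w) \<in> D}"
    using inj_on_subset[OF K(2)] deg less.prems unfolding outdeg_def by (simp add: card_image)
  with lower_out have "v ` {1..<i} = {w. (v i, w) \<in> D}"
    by (rule card_subset_eq[OF finite_out_neighbours[OF D(2)]])
  then show ?case by (rule sym)
qed

text \<open>An arc of H leaving v j ends at some v m with m < j. The initial segment
  {v 1, ..., v m} is closed under out-arcs, so by the balance condition it would contain v j.\<close>
lemma eulerian_sub_no_arc_from_transitive_clique:
  fixes v :: "nat \<Rightarrow> 'a"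
  assumes N: "\<forall>i\<in>{1..k}. {w. (v i, w) \<in> D} = v ` {1..<i}" and inj: "inj_on v {1..k}"
    and "finite D" and H: "eulerian_sub V D H" and "v ` {1..k} \<subseteq> V"
    and "(x, y) \<in> H"
  shows "x \<notin> v ` {1..k}"
proof
  assume "x \<in> v ` {1..k}"
  then obtain j where j: "j \<in> {1..k}" "x = v j" by blast
  have HD: "H \<subseteq> D" and bal: "\<forall>u\<in>V. outdeg H u = indeg H u"
    using H unfolding eulerian_sub_def by auto
  obtain m where m: "m \<in> {1..<j}" "y = v m" using N j HD \<open>(x, y) \<in> H\<close> by blast
  define S where "S = v ` {1..m}"
  have out_closed: "\<forall>(a, b)\<in>H. a \<in> S \<longrightarrow> b \<in> S"
  proof clarify
    fix a b assume "(a, b) \<in> H" "a \<in> S"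
    then obtain c where c: "c \<in> {1..m}" "(v c, b) \<in> D" using HD unfolding S_def by blast
    moreover have "c \<in> {1..k}" using c(1) m(1) j(1) by auto
    ultimately have "b \<in> v ` {1..<c}" using N by blast
    then show "b \<in> S" using c unfolding S_def by auto
  qed
  have "S \<subseteq> v ` {1..k}" using m j unfolding S_def by auto
  then have "\<forall>u\<in>S. outdeg H u = indeg H u" using bal assms(5) by blast
  moreover have "finite H" using HD \<open>finite D\<close> by (rule finite_subset)
  moreover have "y \<in> S" using m unfolding S_def by simp
  ultimately have "x \<in> S"
    using balanced_out_closed_imp_in_closed[OF _ _ _ out_closed \<open>(x, y) \<in> H\<close>]
    unfolding S_def by blast
  then show False using inj j m unfolding S_def inj_on_def by fastforce
qed

lemma clique_sum_orientation:
  assumes sum: "clique_sum k V1 E1 V2 E2 K E"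
    and D1: "is_orientation V1 (E1 \<inter> E) D1" and D2: "is_orientation V2 E2 D2"
  shows "is_orientation (V1 \<union> V2) E (D1 \<union> (D2 - K \<times> K))"
proof -
  have sg: "simple_graph V1 E1" "simple_graph V2 E2" and K: "V1 \<inter> V2 = K" "is_clique V1 E1 K"
    and E: "E \<subseteq> E1 \<union> E2" "\<forall>e \<in> E1 \<union> E2. \<not> e \<subseteq> K \<longrightarrow> e \<in> E"
    using sum unfolding clique_sum_def by auto
  have arcs: "x \<in> V1 \<union> V2 \<and> y \<in> V1 \<union> V2 \<and> {x, y} \<in> E"
    if "(x, y) \<in> D1 \<union> (D2 - K \<times> K)" for x y
    using that orientation_arcs_subset[OF D1] orientation_arcs_subset[OF D2]
      orientation_arcD(3)[OF D1] orientation_arcD(3)[OF D2] E(2) by blast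
  have "(x, y) \<in> D1 \<union> (D2 - K \<times> K) \<longleftrightarrow> (y, x) \<notin> D1 \<union> (D2 - K \<times> K)"
    if e: "{x, y} \<in> E" for x y
  proof (cases "x \<in> V1 \<and> y \<in> V1")
    case True
    have "{x, y} \<in> E1"
    proof (cases "{x, y} \<in> E2")
      case True
      then have "x \<in> K" "y \<in> K" "x \<noteq> y"
        using simple_graph_edgeD[OF sg(2)] \<open>x \<in> V1 \<and> y \<in> V1\<close> K(1) by blast+
      then show ?thesis using K(2) unfolding is_clique_def by blast
    qed (use e E(1) in blast)
    moreover have "(x, y) \<notin> D2 - K \<times> K" "(y, x) \<notin> D2 - K \<times> K"
      using True orientation_arcs_subset[OF D2] K(1) by blast+
    ultimately show ?thesis using orientation_edgeD[OF D1, of x y] e by blast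
  next
    case False
    then have "{x, y} \<in> E2" using e E(1) simple_graph_edgeD[OF sg(1)] by blast
    moreover have "(x, y) \<notin> D1" "(y, x) \<notin> D1" "\<not> (x \<in> K \<and> y \<in> K)"
      using False orientation_arcs_subset[OF D1] K(1) by blast+
    ultimately show ?thesis using orientation_edgeD[OF D2, of x y] by blast
  qed
  with arcs show ?thesis unfolding is_orientation_def by blast
qed

lemma eulerian_subs_Diff_transitive_clique:
  fixes v :: "nat \<Rightarrow> 'a"
  assumes "\<forall>i\<in>{1..k}. {w. (v i, w) \<in> D} = v ` {1..<i}" "inj_on v {1..k}"
    and "finite D" "v ` {1..k} \<subseteq> V"
  shows "eulerian_subs V (D - v ` {1..k} \<times> v ` {1..k}) = eulerian_subs V D"
  using eulerian_sub_no_arc_from_transitive_clique[OF assms(1-3) _ assms(4)]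
  unfolding eulerian_subs_def eulerian_sub_def by blast

lemma clique_sum_AT_orientation:
  assumes sum: "clique_sum k V1 E1 V2 E2 K E"
    and D1: "AT_orientation V1 (E1 \<inter> E) D1" and D2: "AT_orientation V2 E2 D2"
    and K_closed: "\<forall>(x, y)\<in>D2. x \<in> K \<longrightarrow> y \<in> K"
    and eul: "eulerian_subs V2 (D2 - K \<times> K) = eulerian_subs V2 D2"
  shows "AT_orientation (V1 \<union> V2) E (D1 \<union> (D2 - K \<times> K))"
proof -
  have fin: "finite V1" "finite V2" and VK: "V1 \<inter> V2 = K"
    using sum unfolding clique_sum_def simple_graph_def by auto
  have ori: "is_orientation V1 (E1 \<inter> E) D1" "is_orientation V2 E2 D2"
    using D1 D2 unfolding AT_orientation_def by auto
  then have fD: "finite D1" "finite D2" using finite_orientation fin by blast+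
  have "D2 - K \<times> K \<subseteq> (V2 - V1) \<times> V2"
    using orientation_arcs_subset[OF ori(2)] K_closed VK by blast
  then have "eulerian_diff (V1 \<union> V2) (D1 \<union> (D2 - K \<times> K)) =
      eulerian_diff V1 D1 * eulerian_diff V2 D2"
    using eulerian_diff_Un[OF fin(1) fD(1) _ orientation_arcs_subset[OF ori(1)]] fD(2) eul
    unfolding eulerian_diff_def by simp
  moreover have "is_orientation (V1 \<union> V2) E (D1 \<union> (D2 - K \<times> K))"
    using clique_sum_orientation[OF sum ori] .
  ultimately show ?thesis
    using D1 D2 fD by (simp add: AT_orientation_iff_eulerian_diff)
qed

theorem lemma2p3:
  fixes k :: nat and l :: int
    and V1 V2 :: "'a set" and E1 E2 E :: "'a set set"
    and v :: "nat \<Rightarrow> 'a"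
    and D1' D2 :: "('a \<times> 'a) set"
  assumes "k \<ge> 1"
    and "clique_sum k V1 E1 V2 E2 (v ` {1..k}) E"
    and "inj_on v {1..k}"
    and "AT_orientation V1 (E1 \<inter> E) D1'" and "max_outdeg_le V1 D1' l"
    and "AT_orientation V2 E2 D2" and "max_outdeg_le V2 D2 l"
    and "\<forall>i\<in>{1..k}. outdeg D2 (v i) = i - 1"
  shows "\<exists>D. AT_orientation (V1 \<union> V2) E D \<and> max_outdeg_le (V1 \<union> V2) D l \<and>
             (\<forall>u\<in>V1. outdeg D u = outdeg D1' u)"
proof -
  define K where "K = v ` {1..k}"
  define D where "D = D1' \<union> (D2 - K \<times> K)"
  have fin: "finite V2" and VK: "V1 \<inter> V2 = K" and cl2: "is_clique V2 E2 K"
    using assms(2) unfolding clique_sum_def simple_graph_def K_def by auto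
  have ori1: "is_orientation V1 (E1 \<inter> E) D1'" and ori2: "is_orientation V2 E2 D2"
    using assms(4,6) unfolding AT_orientation_def by auto
  have "finite D2" using finite_orientation[OF ori2 fin] .
  have N: "\<forall>i\<in>{1..k}. {w. (v i, w) \<in> D2} = v ` {1..<i}"
    using clique_out_neighbours_eq_lower[OF ori2 \<open>finite D2\<close> cl2[unfolded K_def] assms(3,8)]
    by blast
  then have K_closed: "\<forall>(x, y)\<in>D2. x \<in> K \<longrightarrow> y \<in> K" unfolding K_def by fastforce
  moreover have "eulerian_subs V2 (D2 - K \<times> K) = eulerian_subs V2 D2"
    using eulerian_subs_Diff_transitive_clique[OF N assms(3) \<open>finite D2\<close>] VK
    unfolding K_def by blast
  ultimately have AT: "AT_orientation (V1 \<union> V2) E D"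
    unfolding D_def by (rule clique_sum_AT_orientation[OF assms(2)[folded K_def] assms(4,6)])
  have tails: "D1' \<subseteq> V1 \<times> UNIV" "D2 - K \<times> K \<subseteq> (- V1) \<times> UNIV"
    using orientation_arcs_subset[OF ori1] orientation_arcs_subset[OF ori2] K_closed VK
    by blast+
  have out_V1: "\<forall>u\<in>V1. outdeg D u = outdeg D1' u"
    using outdeg_Un_separated_tails(1)[OF tails] unfolding D_def by blast
  have "outdeg D u = outdeg D2 u" if "u \<in> V2 - V1" for u
    using outdeg_Un_separated_tails(2)[OF tails] that VK unfolding D_def outdeg_def by auto
  with out_V1 have "max_outdeg_le (V1 \<union> V2) D l"
    using assms(5,7) unfolding max_outdeg_le_def by (metis Diff_iff Un_iff)
  with AT out_V1 show ?thesis by blast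
qed

end
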